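(* Let $b\in\mathbb{Z}$ and let $q\ge 0$ be an integer. For $k\in\mathbb{N}$ and $z\in\mathbb{Z}$ let $F_{k,z}$ and $G_{k,z}$ be distribution functions of probability distributions supported on the nonnegative integers. Let $(S_k)_{k\ge0}$ and $(T_k)_{k\ge0}$ be integer-valued processes with $S_0=T_0=b$, $$S_{k+1}=S_k+X_k-q,\qquad T_{k+1}=T_k+Y_k-q,$$ where, conditionally on $S_0,\dots,S_k$, the variable $X_k$ has distribution function $F_{k,S_k}$, and conditionally on $T_0,\dots,T_k$, the variable $Y_k$ has distribution function $G_{k,T_k}$. Assume: (1) for all $k\in\mathbb{N}$, $z\in\mathbb{Z}$, $l\in\mathbb{R}$: $G_{k,z}(l)\le G_{k,z-1}(l+1)$; (2) there is an integer $M\ge b$ such that for all $k\in\mathbb N$ and all integers $z\le M-kq$, $F_{k,z}\succ G_{k,z}$. Then for every $n\ge1$ and every integers $l_1,\dots,l_n$ with $l_k\le M-kq$ for all $k$, $$\Pr[S_1>l_1,S_2>l_2,\dots,S_n>l_n]\ \ge\ \Pr[T_1>l_1,T_2>l_2,\dots,T_n>l_n].$$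
   Context: For distribution functions $F,G$ on $\mathbb{R}$, $F\succ G$ means $F(t)\le G(t)$ for all $t\in\mathbb{R}$ (i.e. $F$ stochastically dominates $G$). *)

theory Defs
  imports "HOL-Probability.Probability"
begin

definition dist_fun :: "nat pmf \<Rightarrow> real \<Rightarrow> real" where
  "dist_fun p t = measure_pmf.prob p {x. real x \<le> t}"

definition st_dom :: "(real \<Rightarrow> real) \<Rightarrow> (real \<Rightarrow> real) \<Rightarrow> bool" where
  "st_dom F G \<longleftrightarrow> (\<forall>t. F t \<le> G t)"

text \<open>Joint law of the path (S_1, ..., S_n) (as a list of length n, entry i-1 being S_i)
  of the process S_0 = b, S_{k+1} = S_k + X_k - q, where conditionally on S_0..S_k,
  X_k has law P k S_k.\<close>
fun path :: "(nat \<Rightarrow> int \<Rightarrow> nat pmf) \<Rightarrow> int \<Rightarrow> int \<Rightarrow> nat \<Rightarrow> int list pmf" where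
  "path P q b 0 = return_pmf []"
| "path P q b (Suc n) =
     bind_pmf (path P q b n) (\<lambda>xs.
       map_pmf (\<lambda>x. xs @ [last (b # xs) + int x - q]) (P n (last (b # xs))))"

end

theory Submission
  imports Defs
begin

text \<open>Let \<open>P(c)\<close> be the probability that a path started at \<open>c\<close> stays above the barriers.
  Conditioning on the first step gives \<open>P(b) = E \<psi>(b + X\<^sub>0 - q)\<close>, where \<open>\<psi>\<close> is the same
  probability for the remaining barriers, set to \<open>0\<close> at or below \<open>l\<^sub>1\<close>. Since a monotone bounded
  function has larger expectation under a dominating law, hypothesis (1) (the law of \<open>Y\<^sub>0\<close> from
  \<open>z - 1\<close> is dominated by that of \<open>1 + Y\<^sub>0\<close> from \<open>z\<close>) makes \<open>P\<^sub>T\<close> monotone in the start, by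
  induction on the number of steps. Then, again by induction, first replace the law of \<open>Y\<^sub>0\<close> by
  the dominating law of \<open>X\<^sub>0\<close> (\<open>\<psi>\<^sub>T\<close> being monotone) and then \<open>\<psi>\<^sub>T\<close> by \<open>\<psi>\<^sub>S\<close>, with \<open>M\<close> lowered
  by \<open>q\<close>. No dominance is needed from starts above \<open>M\<close>: increments are at least \<open>-q\<close>, so such
  paths surely stay above all barriers \<open>l\<^sub>k \<le> M - kq\<close>.\<close>

lemma path_Suc_first_step:
  "path P q b (Suc n) = bind_pmf (P 0 b) (\<lambda>x. map_pmf (\<lambda>ys. (b + int x - q) # ys)
      (path (\<lambda>k. P (Suc k)) q (b + int x - q) n))"
proof (induction n)
  case 0
  then show ?case by (simp add: map_pmf_def bind_return_pmf)
next
  case (Suc n)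
  have "path P q b (Suc (Suc n)) = bind_pmf (path P q b (Suc n)) (\<lambda>xs.
       map_pmf (\<lambda>x. xs @ [last (b # xs) + int x - q]) (P (Suc n) (last (b # xs))))"
    by (simp only: path.simps)
  also have "\<dots> = bind_pmf (P 0 b) (\<lambda>x. map_pmf (\<lambda>ys. (b + int x - q) # ys)
      (path (\<lambda>k. P (Suc k)) q (b + int x - q) (Suc n)))"
    unfolding Suc by (simp add: bind_assoc_pmf bind_map_pmf map_bind_pmf map_pmf_comp)
  finally show ?case .
qed

lemma integrable_measure_pmf_bounded:
  "(\<And>x. \<bar>f x\<bar> \<le> B) \<Longrightarrow> integrable (measure_pmf p) (f :: _ \<Rightarrow> real)"
  by (intro measure_pmf.integrable_const_bound[where B=B]) auto

lemma measure_pmf_prob_bind: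
  "measure_pmf.prob (bind_pmf p N) E = (\<integral>x. measure_pmf.prob (N x) E \<partial>p)"
proof -
  have "ennreal (measure_pmf.prob (bind_pmf p N) E) = (\<integral>\<^sup>+x. emeasure (N x) E \<partial>p)"
    by (simp add: measure_pmf.emeasure_eq_measure[symmetric])
  also have "\<dots> = (\<integral>\<^sup>+x. ennreal (measure_pmf.prob (N x) E) \<partial>p)"
    by (simp add: measure_pmf.emeasure_eq_measure)
  also have "\<dots> = ennreal (\<integral>x. measure_pmf.prob (N x) E \<partial>p)"
    by (intro nn_integral_eq_integral integrable_measure_pmf_bounded[where B=1]) auto
  finally show ?thesis by (simp add: integral_nonneg_AE)
qed

lemma dist_fun_map_Suc: "dist_fun (map_pmf Suc p) t = dist_fun p (t - 1)"
proof -
  have "{x. real x \<le> t - 1} = Suc -` {x. real x \<le> t}" by auto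
  then show ?thesis unfolding dist_fun_def by simp
qed

lemma tail_prob_mono_dist_fun:
  assumes "\<And>t. dist_fun p t \<le> dist_fun p' t"
  shows "measure_pmf.prob p' {Suc N..} \<le> measure_pmf.prob p {Suc N..}"
proof -
  have "{Suc N..} = UNIV - {x. real x \<le> real N}" by auto
  then have "measure_pmf.prob r {Suc N..} = 1 - dist_fun r (real N)" for r :: "nat pmf"
    unfolding dist_fun_def by (subst measure_pmf.prob_compl[symmetric]) auto
  then show ?thesis using assms[of "real N"] by simp
qed

lemma integral_min_tendsto:
  fixes \<phi> :: "nat \<Rightarrow> real" and p :: "nat pmf"
  assumes "\<And>x. \<bar>\<phi> x\<bar> \<le> B"
  shows "(\<lambda>N. \<integral>x. \<phi> (min x N) \<partial>p) \<longlonglongrightarrow> (\<integral>x. \<phi> x \<partial>p)"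
proof (rule integral_dominated_convergence[where w="\<lambda>_. B"])
  show "AE x in measure_pmf p. (\<lambda>N. \<phi> (min x N)) \<longlonglongrightarrow> \<phi> x"
  proof (rule AE_I2)
    fix x
    have "eventually (\<lambda>N. \<phi> (min x N) = \<phi> x) sequentially"
      using eventually_ge_at_top[of x] by eventually_elim (simp add: min_absorb1)
    then show "(\<lambda>N. \<phi> (min x N)) \<longlonglongrightarrow> \<phi> x" by (rule tendsto_eventually)
  qed
qed (use assms in auto)

text \<open>The truncations \<open>\<phi> \<circ> min N\<close> satisfy \<open>E \<phi>(min x (N+1)) = E \<phi>(min x N) +
  (\<phi>(N+1) - \<phi>(N)) \<cdot> P(x > N)\<close>, so the inequality holds for them by induction on \<open>N\<close>.\<close>

lemma integral_mono_dist_fun: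
  fixes p p' :: "nat pmf" and \<phi> :: "nat \<Rightarrow> real"
  assumes dom: "\<And>t. dist_fun p t \<le> dist_fun p' t"
    and "mono \<phi>" and bounded: "\<And>x. \<bar>\<phi> x\<bar> \<le> B"
  shows "(\<integral>x. \<phi> x \<partial>p') \<le> (\<integral>x. \<phi> x \<partial>p)"
proof -
  have truncation_Suc: "(\<integral>x. \<phi> (min x (Suc N)) \<partial>r) = (\<integral>x. \<phi> (min x N) \<partial>r)
      + (\<phi> (Suc N) - \<phi> N) * measure_pmf.prob r {Suc N..}" for r :: "nat pmf" and N
  proof -
    have "(\<lambda>x. \<phi> (min x (Suc N)))
        = (\<lambda>x. \<phi> (min x N) + (\<phi> (Suc N) - \<phi> N) * indicator {Suc N..} x)"
      by (rule ext) (auto simp: indicator_def min_def le_Suc_eq)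
    moreover have "(\<integral>x. \<phi> (min x N) + (\<phi> (Suc N) - \<phi> N) * indicator {Suc N..} x \<partial>r)
        = (\<integral>x. \<phi> (min x N) \<partial>r) + (\<integral>x. (\<phi> (Suc N) - \<phi> N) * indicator {Suc N..} x \<partial>r)"
      by (rule Bochner_Integration.integral_add)
        (auto intro: integrable_measure_pmf_bounded[where B=1] integrable_measure_pmf_bounded bounded)
    ultimately show ?thesis by simp
  qed
  have "(\<integral>x. \<phi> (min x N) \<partial>p') \<le> (\<integral>x. \<phi> (min x N) \<partial>p)" for N
  proof (induction N)
    case (Suc N)
    have "0 \<le> \<phi> (Suc N) - \<phi> N" using \<open>mono \<phi>\<close> by (simp add: mono_def)
    from mult_left_mono[OF tail_prob_mono_dist_fun[OF dom, of N] this] show ?case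
      unfolding truncation_Suc using Suc by linarith
  qed simp
  then show ?thesis
    by (intro LIMSEQ_le[OF integral_min_tendsto[OF bounded] integral_min_tendsto[OF bounded]]) auto
qed

lemma int_mono_by_step:
  fixes f :: "int \<Rightarrow> 'a :: order"
  assumes "\<And>z. f (z - 1) \<le> f z" and "b \<le> b'"
  shows "f b \<le> f b'"
  using \<open>b \<le> b'\<close>
proof (induction b' rule: int_ge_induct)
  case (step z)
  then show ?case using assms(1)[of "z + 1"] by simp
qed simp

definition stays_above :: "nat \<Rightarrow> (nat \<Rightarrow> int) \<Rightarrow> int list set" where
  "stays_above n l = {xs. \<forall>k\<in>{1..n}. xs ! (k - 1) > l k}"

definition stay_prob :: "(nat \<Rightarrow> int \<Rightarrow> nat pmf) \<Rightarrow> int \<Rightarrow> int \<Rightarrow> nat \<Rightarrow> (nat \<Rightarrow> int) \<Rightarrow> real"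
  where "stay_prob P q b n l = measure_pmf.prob (path P q b n) (stays_above n l)"

definition stay_prob_tail :: "(nat \<Rightarrow> int \<Rightarrow> nat pmf) \<Rightarrow> int \<Rightarrow> nat \<Rightarrow> (nat \<Rightarrow> int) \<Rightarrow> int \<Rightarrow> real"
  where "stay_prob_tail P q n l c =
    (if l 1 < c then stay_prob (\<lambda>k. P (Suc k)) q c n (\<lambda>k. l (Suc k)) else 0)"

lemma ball_Icc_Suc_split:
  "(\<forall>k\<in>{1..Suc n}. Q k) \<longleftrightarrow> Q (1::nat) \<and> (\<forall>k\<in>{1..n}. Q (Suc k))"
  by (auto simp: Ball_def) (metis Suc_le_D Suc_le_mono not_less_eq_eq order_antisym)

lemma stays_above_Cons:
  "((#) c) -` stays_above (Suc n) l = (if l 1 < c then stays_above n (\<lambda>k. l (Suc k)) else {})"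
proof -
  have "c # ys \<in> stays_above (Suc n) l \<longleftrightarrow> l 1 < c \<and> ys \<in> stays_above n (\<lambda>k. l (Suc k))"
    for ys
    unfolding stays_above_def mem_Collect_eq ball_Icc_Suc_split by simp
  then show ?thesis by auto
qed

lemma stay_prob_0: "stay_prob P q b 0 l = 1"
  by (simp add: stay_prob_def stays_above_def)

lemma stay_prob_Suc:
  "stay_prob P q b (Suc n) l = (\<integral>x. stay_prob_tail P q n l (b + int x - q) \<partial>P 0 b)"
  unfolding stay_prob_def path_Suc_first_step measure_pmf_prob_bind measure_map_pmf
    stays_above_Cons stay_prob_tail_def
  by (intro Bochner_Integration.integral_cong) auto

lemma stay_prob_nonneg: "0 \<le> stay_prob P q b n l"
  and stay_prob_le_1: "stay_prob P q b n l \<le> 1"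
  by (simp_all add: stay_prob_def)

lemma abs_stay_prob_tail_le_1: "\<bar>stay_prob_tail P q n l c\<bar> \<le> 1"
  using stay_prob_nonneg stay_prob_le_1 by (simp add: stay_prob_tail_def)

lemma mono_stay_prob_tail:
  assumes "mono (\<lambda>b. stay_prob (\<lambda>k. P (Suc k)) q b n (\<lambda>k. l (Suc k)))"
  shows "mono (stay_prob_tail P q n l)"
  using assms stay_prob_nonneg by (auto simp: mono_def stay_prob_tail_def)

lemma mono_stay_prob_start:
  assumes shift: "\<And>k z (t::real). dist_fun (P k z) t \<le> dist_fun (P k (z - 1)) (t + 1)"
  shows "mono (\<lambda>b. stay_prob P q b n l)"
  using shift
proof (induction n arbitrary: P l)
  case 0
  then show ?case by (simp add: stay_prob_0 mono_def)
next
  case (Suc n)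
  have tail_mono: "mono (stay_prob_tail P q n l)"
    by (intro mono_stay_prob_tail Suc.IH Suc.prems)
  have "stay_prob P q (z - 1) (Suc n) l \<le> stay_prob P q z (Suc n) l" for z
  proof -
    have "stay_prob P q (z - 1) (Suc n) l
        = (\<integral>x. stay_prob_tail P q n l (z - 1 + int x - q) \<partial>P 0 (z - 1))"
      by (rule stay_prob_Suc)
    also have "\<dots> \<le> (\<integral>x. stay_prob_tail P q n l (z - 1 + int x - q) \<partial>map_pmf Suc (P 0 z))"
    proof (rule integral_mono_dist_fun)
      show "dist_fun (map_pmf Suc (P 0 z)) t \<le> dist_fun (P 0 (z - 1)) t" for t
        using Suc.prems[of 0 z "t - 1"] by (simp add: dist_fun_map_Suc)
      show "mono (\<lambda>x. stay_prob_tail P q n l (z - 1 + int x - q))"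
        by (intro monoI monoD[OF tail_mono]) simp
    qed (rule abs_stay_prob_tail_le_1)
    also have "\<dots> = stay_prob P q z (Suc n) l"
      by (simp add: stay_prob_Suc algebra_simps)
    finally show ?thesis .
  qed
  then show ?case
    by (intro monoI) (rule int_mono_by_step[where f="\<lambda>b. stay_prob P q b (Suc n) l"])
qed

lemma stay_prob_eq_1_if_start_above:
  assumes "M < b" and "\<forall>k\<in>{1..n}. l k \<le> M - int k * q"
  shows "stay_prob P q b n l = 1"
  using assms
proof (induction n arbitrary: P M b l)
  case 0
  then show ?case by (simp add: stay_prob_0)
next
  case (Suc n)
  have "stay_prob_tail P q n l (b + int x - q) = 1" for x
  proof -
    have start: "M - q < b + int x - q" using Suc.prems(1) by simp
    have "l 1 \<le> M - q" "\<forall>k\<in>{1..n}. l (Suc k) \<le> (M - q) - int k * q"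
      using Suc.prems(2)[unfolded ball_Icc_Suc_split] by (simp_all add: algebra_simps)
    then show ?thesis
      using Suc.IH[OF start] start by (simp add: stay_prob_tail_def)
  qed
  then show ?case by (simp add: stay_prob_Suc)
qed

lemma stay_prob_dominance:
  assumes G_shift: "\<And>k z (t::real). dist_fun (PG k z) t \<le> dist_fun (PG k (z - 1)) (t + 1)"
    and dom: "\<And>k z. z \<le> M - int k * q \<Longrightarrow> st_dom (dist_fun (PF k z)) (dist_fun (PG k z))"
    and barriers: "\<forall>k\<in>{1..n}. l k \<le> M - int k * q"
  shows "stay_prob PG q b n l \<le> stay_prob PF q b n l"
  using G_shift dom barriers
proof (induction n arbitrary: PF PG M b l)
  case 0
  then show ?case by (simp add: stay_prob_0)
next
  case (Suc n)
  show ?case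
  proof (cases "M < b")
    case True
    then show ?thesis
      using stay_prob_eq_1_if_start_above[OF True Suc.prems(3)] stay_prob_le_1 by simp
  next
    case False
    have shift': "dist_fun (PG (Suc k) z) t \<le> dist_fun (PG (Suc k) (z - 1)) (t + 1)" for k z t
      by (rule Suc.prems(1))
    have dom': "st_dom (dist_fun (PF (Suc k) z)) (dist_fun (PG (Suc k) z))"
      if "z \<le> (M - q) - int k * q" for k z
      using Suc.prems(2)[of z "Suc k"] that by (simp add: algebra_simps)
    have barriers': "\<forall>k\<in>{1..n}. l (Suc k) \<le> (M - q) - int k * q"
      using Suc.prems(3)[unfolded ball_Icc_Suc_split] by (simp add: algebra_simps)
    have tail_le: "stay_prob_tail PG q n l c \<le> stay_prob_tail PF q n l c" for c
      using Suc.IH[where PF="\<lambda>k. PF (Suc k)" and PG="\<lambda>k. PG (Suc k)", OF shift' dom' barriers']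
      by (simp add: stay_prob_tail_def)
    have tail_mono: "mono (stay_prob_tail PG q n l)"
      by (intro mono_stay_prob_tail mono_stay_prob_start shift')
    have tail_shift_mono: "mono (\<lambda>x. stay_prob_tail PG q n l (b + int x - q))"
      by (intro monoI monoD[OF tail_mono]) simp
    have "stay_prob PG q b (Suc n) l = (\<integral>x. stay_prob_tail PG q n l (b + int x - q) \<partial>PG 0 b)"
      by (rule stay_prob_Suc)
    also have "\<dots> \<le> (\<integral>x. stay_prob_tail PG q n l (b + int x - q) \<partial>PF 0 b)"
      using Suc.prems(2)[of b 0] False
      by (intro integral_mono_dist_fun[OF _ tail_shift_mono abs_stay_prob_tail_le_1])
        (simp add: st_dom_def)
    also have "\<dots> \<le> (\<integral>x. stay_prob_tail PF q n l (b + int x - q) \<partial>PF 0 b)"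
      by (intro integral_mono integrable_measure_pmf_bounded[OF abs_stay_prob_tail_le_1] tail_le)
    also have "\<dots> = stay_prob PF q b (Suc n) l"
      by (rule stay_prob_Suc[symmetric])
    finally show ?thesis .
  qed
qed

theorem lemma2:
  fixes b q M :: int
    and PF PG :: "nat \<Rightarrow> int \<Rightarrow> nat pmf"
  assumes q_nonneg: "0 \<le> q"
    and G_shift: "\<And>k z (l::real). dist_fun (PG k z) l \<le> dist_fun (PG k (z - 1)) (l + 1)"
    and M_ge: "b \<le> M"
    and dom: "\<And>k z. z \<le> M - int k * q \<Longrightarrow> st_dom (dist_fun (PF k z)) (dist_fun (PG k z))"
  shows "\<forall>(n::nat) (l::nat \<Rightarrow> int). n \<ge> 1 \<longrightarrow> (\<forall>k\<in>{1..n}. l k \<le> M - int k * q) \<longrightarrow>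
           measure_pmf.prob (path PF q b n) {xs. \<forall>k\<in>{1..n}. xs ! (k - 1) > l k}
         \<ge> measure_pmf.prob (path PG q b n) {xs. \<forall>k\<in>{1..n}. xs ! (k - 1) > l k}"
  using stay_prob_dominance[where PF=PF and PG=PG and M=M and q=q, OF G_shift dom]
  by (simp add: stay_prob_def stays_above_def)

end
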